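(* Let $\mathcal{B}$ be a real Banach space, $\mathcal{P}$ a cone over $\mathcal{B}$ with induced partial order $\preceq$, let $\mathcal{Q}$ be a real vector space and $d$ a quasi-cone metric on $\mathcal{Q}$ with values in $\mathcal{B}$. Let $H$ be a non-empty subset of $\mathcal{Q}$. Then $H$ is a forward pseudo Chebyshev subset of $\mathcal{Q}$ if and only if there do not exist $q\in\mathcal{Q}$, infinitely many linearly independent elements $\{h_n\}_{n\in\mathbb{N}}\subseteq H$, and a function $f:\mathcal{Q}\to\mathcal{B}$ such that for all $n\in\mathbb{N}$: $f(h_n)=d(q,h_n)$, $\{f(h)-f(h_n): h\in H\}\subseteq\mathcal{P}$, and $\{d(q,h)-f(h): h\in H\}\subseteq\mathcal{P}$.
   Context: A cone over a real Banach space $\mathcal{B}$ is a subset $\mathcal{P}\subseteq\mathcal{B}$ that is closed, $\mathcal{P}\neq\{0_\mathcal{B}\}$, satisfies $ax+by\in\mathcal{P}$ for all $x,y\in\mathcal{P}$ and $a,b\geq 0$, and such that $x\in\mathcal{P}$ and $-x\in\mathcal{P}$ imply $x=0_\mathcal{B}$. For $r,s\in\mathcal{B}$, $s\preceq r$ means $r-s\in\mathcal{P}$. A quasi-cone metric on a set $\mathcal{Q}$ is a map $d:\mathcal{Q}\times\mathcal{Q}\to\mathcal{B}$ such that for all $r,s,t\in\mathcal{Q}$: $d(r,s)\succeq 0_\mathcal{B}$; $d(r,s)=0_\mathcal{B}$ iff $r=s$; $d(r,t)\preceq d(r,s)+d(s,t)$. For non-empty $H\subseteq\mathcal{Q}$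 and $q\in\mathcal{Q}$, $\mathcal{P}_{H_f}(q)$ is the set of all $h_f\in H$ with $d(q,h_f)\preceq d(q,h)$ for all $h\in H$. A non-empty $H\subseteq\mathcal{Q}$ is a forward pseudo Chebyshev subset of $\mathcal{Q}$ if for every $q\in\mathcal{Q}$ the set $\mathcal{P}_{H_f}(q)$ does not contain infinitely many linearly independent elements. *)

theory Defs
  imports "HOL-Analysis.Analysis"
begin

definition is_cone :: "'b::banach set \<Rightarrow> bool" where
  "is_cone P \<longleftrightarrow> closed P \<and> P \<noteq> {0} \<and>
     (\<forall>x\<in>P. \<forall>y\<in>P. \<forall>a b :: real. a \<ge> 0 \<longrightarrow> b \<ge> 0 \<longrightarrow> a *\<^sub>R x + b *\<^sub>R y \<in> P) \<and>
     (\<forall>x. x \<in> P \<and> - x \<in> P \<longrightarrow> x = 0)"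

definition cone_le :: "'b::banach set \<Rightarrow> 'b \<Rightarrow> 'b \<Rightarrow> bool" where
  "cone_le P s r \<longleftrightarrow> r - s \<in> P"

definition quasi_cone_metric :: "'b::banach set \<Rightarrow> ('a \<Rightarrow> 'a \<Rightarrow> 'b) \<Rightarrow> bool" where
  "quasi_cone_metric P d \<longleftrightarrow>
     (\<forall>r s. cone_le P 0 (d r s)) \<and>
     (\<forall>r s. d r s = 0 \<longleftrightarrow> r = s) \<and>
     (\<forall>r s t. cone_le P (d r t) (d r s + d s t))"

definition forward_proj :: "'b::banach set \<Rightarrow> ('a \<Rightarrow> 'a \<Rightarrow> 'b) \<Rightarrow> 'a set \<Rightarrow> 'a \<Rightarrow> 'a set" where
  "forward_proj P d H q = {hf \<in> H. \<forall>h\<in>H. cone_le P (d q hf) (d q h)}"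

definition forward_pseudo_chebyshev ::
  "'b::banach set \<Rightarrow> ('a::real_vector \<Rightarrow> 'a \<Rightarrow> 'b) \<Rightarrow> 'a set \<Rightarrow> bool" where
  "forward_pseudo_chebyshev P d H \<longleftrightarrow> H \<noteq> {} \<and>
     (\<forall>q. \<not> (\<exists>S. S \<subseteq> forward_proj P d H q \<and> infinite S \<and> independent S))"

end

theory Submission
  imports Defs
begin

text \<open>A function f with d q - f \<succeq> 0 on H that attains its \<preceq>-minimum over H at a point h
  where it agrees with d q forces d q h \<preceq> f x \<preceq> d q x for all x in H, so h is a forward
  best approximation of q; conversely every set of forward best approximations admits
  f = d q itself. Infinite linearly independent sets and injective sequences with
  independent range are interchangeable by passing to a countable subset.\<close>

lemma cone_add:
  assumes "is_cone P" "x \<in> P" "y \<in> P"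
  shows "x + y \<in> P"
  using assms unfolding is_cone_def by (metis scaleR_one zero_le_one)

text \<open>The empty set satisfies is_cone, so membership of 0 needs some element of P.\<close>

lemma cone_zero_mem:
  assumes "is_cone P" "x \<in> P"
  shows "0 \<in> P"
  using assms unfolding is_cone_def by (metis scaleR_zero_left add_0 order_refl)

lemma quasi_cone_metric_mem_cone:
  assumes "quasi_cone_metric P d"
  shows "d r s \<in> P"
  using assms unfolding quasi_cone_metric_def cone_le_def by simp

lemma subset_forward_proj_iff:
  assumes "is_cone P" "quasi_cone_metric P d"
  shows "S \<subseteq> forward_proj P d H q \<longleftrightarrow> S \<subseteq> H \<and>
    (\<exists>f. \<forall>y\<in>S. f y = d q y \<and> (\<forall>x\<in>H. f x - f y \<in> P) \<and> (\<forall>x\<in>H. d q x - f x \<in> P))"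
proof
  assume "S \<subseteq> forward_proj P d H q"
  moreover have "0 \<in> P"
    using cone_zero_mem[OF assms(1) quasi_cone_metric_mem_cone[OF assms(2)]] .
  ultimately show "S \<subseteq> H \<and>
    (\<exists>f. \<forall>y\<in>S. f y = d q y \<and> (\<forall>x\<in>H. f x - f y \<in> P) \<and> (\<forall>x\<in>H. d q x - f x \<in> P))"
    unfolding forward_proj_def cone_le_def by (intro conjI exI[of _ "d q"]) auto
next
  assume "S \<subseteq> H \<and>
    (\<exists>f. \<forall>y\<in>S. f y = d q y \<and> (\<forall>x\<in>H. f x - f y \<in> P) \<and> (\<forall>x\<in>H. d q x - f x \<in> P))"
  then obtain f where "S \<subseteq> H"
    and f: "\<And>y. y \<in> S \<Longrightarrow> f y = d q y" "\<And>x y. y \<in> S \<Longrightarrow> x \<in> H \<Longrightarrow> f x - f y \<in> P"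
      "\<And>x y. y \<in> S \<Longrightarrow> x \<in> H \<Longrightarrow> d q x - f x \<in> P"
    by blast
  have "cone_le P (d q y) (d q x)" if "y \<in> S" "x \<in> H" for x y
  proof -
    have "(d q x - f x) + (f x - f y) \<in> P"
      using cone_add[OF assms(1)] f that by blast
    then show ?thesis
      unfolding cone_le_def f(1)[OF \<open>y \<in> S\<close>, symmetric] by simp
  qed
  then show "S \<subseteq> forward_proj P d H q"
    using \<open>S \<subseteq> H\<close> unfolding forward_proj_def by blast
qed

lemma ex_infinite_independent_subset_iff_sequence:
  "(\<exists>S. S \<subseteq> A \<and> infinite S \<and> independent S) \<longleftrightarrow>
    (\<exists>h :: nat \<Rightarrow> 'a::real_vector. inj h \<and> range h \<subseteq> A \<and> independent (range h))"
proof
  assume "\<exists>S. S \<subseteq> A \<and> infinite S \<and> independent S"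
  then obtain S where S: "S \<subseteq> A" "infinite S" "independent S"
    by blast
  obtain h :: "nat \<Rightarrow> 'a" where "inj h" "range h \<subseteq> S"
    using infinite_countable_subset[OF S(2)] by blast
  then show "\<exists>h :: nat \<Rightarrow> 'a. inj h \<and> range h \<subseteq> A \<and> independent (range h)"
    using S dependent_mono by blast
next
  assume "\<exists>h :: nat \<Rightarrow> 'a. inj h \<and> range h \<subseteq> A \<and> independent (range h)"
  then show "\<exists>S. S \<subseteq> A \<and> infinite S \<and> independent S"
    using range_inj_infinite by blast
qed

theorem theorem7:
  fixes P :: "'b::banach set" and d :: "'a::real_vector \<Rightarrow> 'a \<Rightarrow> 'b" and H :: "'a set"
  assumes "is_cone P"
    and "quasi_cone_metric P d"
    and "H \<noteq> {}"
  shows "forward_pseudo_chebyshev P d H \<longleftrightarrow>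
    \<not> (\<exists>q (h :: nat \<Rightarrow> 'a) (f :: 'a \<Rightarrow> 'b).
          inj h \<and> range h \<subseteq> H \<and> independent (range h) \<and>
          (\<forall>n. f (h n) = d q (h n) \<and>
               (\<forall>x\<in>H. f x - f (h n) \<in> P) \<and>
               (\<forall>x\<in>H. d q x - f x \<in> P)))"
proof -
  have "forward_pseudo_chebyshev P d H \<longleftrightarrow>
    \<not> (\<exists>q (h :: nat \<Rightarrow> 'a). inj h \<and> range h \<subseteq> forward_proj P d H q \<and> independent (range h))"
    unfolding forward_pseudo_chebyshev_def ex_infinite_independent_subset_iff_sequence
    using assms(3) by blast
  also have "\<dots> \<longleftrightarrow>
    \<not> (\<exists>q (h :: nat \<Rightarrow> 'a) (f :: 'a \<Rightarrow> 'b).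
          inj h \<and> range h \<subseteq> H \<and> independent (range h) \<and>
          (\<forall>n. f (h n) = d q (h n) \<and>
               (\<forall>x\<in>H. f x - f (h n) \<in> P) \<and>
               (\<forall>x\<in>H. d q x - f x \<in> P)))"
    unfolding subset_forward_proj_iff[OF assms(1,2)] by blast
  finally show ?thesis .
qed

end
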